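(* Let $p$ be a prime, let $d_1,\dots,d_l$ be integers with $1\le d_\lambda\le p$, and put $d=\sum_\lambda d_\lambda$. Then for every integer $s$ with $1\le s\le p-1$, \[ s-\mathrm{sht}_V(s)=\mathrm{sht}_V(p-s)+s+d-l-D_V. \]
   Context: Here $D_V:=\sum_{\lambda=1}^{l}\frac{(d_\lambda-1)d_\lambda}{2}$ and, for a positive integer $j$ with $p\nmid j$, $\mathrm{sht}_V(j):=\sum_{\lambda=1}^{l}\sum_{i=1}^{d_\lambda-1}\lfloor ij/p\rfloor$. (In the paper these arise from the decomposition $V\cong\bigoplus_\lambda V_{d_\lambda}$ of a representation of $\mathbb{Z}/p$ in characteristic $p$ into indecomposables.) *)

theory Defs
  imports Complex_Main "HOL-Computational_Algebra.Primes"
begin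

text \<open>The decomposition is encoded by the number l of indecomposable summands and
the dimensions d 1, ..., d l (values of d outside 1..l are irrelevant).\<close>

definition D_V :: "(nat \<Rightarrow> int) \<Rightarrow> nat \<Rightarrow> int" where
  "D_V d l = (\<Sum>k=1..l. ((d k - 1) * d k) div 2)"

definition sht_V :: "int \<Rightarrow> (nat \<Rightarrow> int) \<Rightarrow> nat \<Rightarrow> int \<Rightarrow> int" where
  "sht_V p d l j = (\<Sum>k=1..l. \<Sum>i=1..d k - 1. \<lfloor>of_int (i * j) / (of_int p :: real)\<rfloor>)"

end

theory Submission
  imports Defs
begin

text \<open>For \<open>0 < i, s < p\<close> the prime \<open>p\<close> does
  not divide \<open>i s\<close>, so \<open>i s div p + i (p - s) div p = i - 1\<close>; summing this over
  \<open>1 \<le> i \<le> d\<^sub>\<lambda> - 1\<close> gives \<open>(d\<^sub>\<lambda> - 1) d\<^sub>\<lambda> / 2 - (d\<^sub>\<lambda> - 1)\<close>, and summing over the blocks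
  yields the identity.\<close>

lemma sht_V_eq_div:
  "sht_V p d l j = (\<Sum>k=1..l. \<Sum>i=1..d k - 1. (i * j) div p)"
  unfolding sht_V_def by (simp add: floor_divide_of_int_eq flip: of_int_mult)

lemma prime_not_dvd_mult_of_less:
  fixes p i s :: int
  assumes "prime p" "0 < i" "i < p" "0 < s" "s < p"
  shows "\<not> p dvd i * s"
proof
  assume "p dvd i * s"
  then have "p dvd i \<or> p dvd s"
    using assms(1) prime_dvd_mult_iff by blast
  then show False
    using zdvd_imp_le[of p i] zdvd_imp_le[of p s] assms(2-5) by auto
qed

lemma div_mult_complement:
  fixes p i s :: int
  assumes "0 < p" "\<not> p dvd i * s"
  shows "(i * (p - s)) div p = i - (i * s) div p - 1"
proof -
  have "(i * (p - s)) div p = i + (- (i * s)) div p"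
    using div_mult_self1[of p "- (i * s)" i] assms(1) by (simp add: algebra_simps)
  also have "(- (i * s)) div p = - ((i * s) div p) - 1"
    using zdiv_zminus1_eq_if[of p "i * s"] assms by (simp add: dvd_eq_mod_eq_0)
  finally show ?thesis by simp
qed

lemma sum_atLeastAtMost_1_int:
  fixes n :: int
  assumes "0 \<le> n"
  shows "(\<Sum>i=1..n. i) = n * (n + 1) div 2"
proof (cases "n = 0")
  case False
  then show ?thesis using assms Sum_Icc_int[of 1 n] by simp
qed simp

lemma sum_div_complement:
  fixes p e s :: int
  assumes "prime p" "1 \<le> e" "e \<le> p" "1 \<le> s" "s \<le> p - 1"
  shows "(\<Sum>i=1..e - 1. (i * (p - s)) div p)
           = (e - 1) * e div 2 - (\<Sum>i=1..e - 1. (i * s) div p) - (e - 1)"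
proof -
  have "(\<Sum>i=1..e - 1. (i * (p - s)) div p) = (\<Sum>i=1..e - 1. i - (i * s) div p - 1)"
  proof (rule sum.cong[OF refl])
    fix i assume "i \<in> {1..e - 1}"
    then have "\<not> p dvd i * s"
      using prime_not_dvd_mult_of_less[OF assms(1)] assms(3-5) by simp
    then show "(i * (p - s)) div p = i - (i * s) div p - 1"
      using div_mult_complement prime_gt_0_int[OF assms(1)] by blast
  qed
  also have "\<dots> = (\<Sum>i=1..e - 1. i) - (\<Sum>i=1..e - 1. (i * s) div p) - (e - 1)"
    using assms(2) by (simp add: sum_subtractf)
  also have "(\<Sum>i=1..e - 1. i) = (e - 1) * e div 2"
    using sum_atLeastAtMost_1_int[of "e - 1"] assms(2) by simp
  finally show ?thesis .
qed

theorem lemma3p2: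
  fixes p :: int and l :: nat and d :: "nat \<Rightarrow> int" and s :: int
  assumes "prime p"
    and "\<And>k. k \<in> {1..l} \<Longrightarrow> 1 \<le> d k \<and> d k \<le> p"
    and "1 \<le> s" and "s \<le> p - 1"
  shows "s - sht_V p d l s
           = sht_V p d l (p - s) + s + (\<Sum>k=1..l. d k) - int l - D_V d l"
proof -
  have "sht_V p d l (p - s)
          = (\<Sum>k=1..l. (d k - 1) * d k div 2 - (\<Sum>i=1..d k - 1. (i * s) div p) - (d k - 1))"
    unfolding sht_V_eq_div
    using sum_div_complement[OF assms(1) _ _ assms(3,4)] assms(2) by (intro sum.cong) auto
  also have "\<dots> = D_V d l - sht_V p d l s - ((\<Sum>k=1..l. d k) - int l)"
    unfolding sht_V_eq_div D_V_def by (simp add: sum_subtractf)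
  finally show ?thesis by simp
qed

end
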